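(* Let $M$ be a smooth hypersurface immersed in $\mathbb R^{n+1}$ and suppose that at some point, for some $\varepsilon>0$, the second fundamental form satisfies $\alpha\ge \varepsilon H g>0$ (i.e. $k_1\ge\varepsilon H>0$). Then $\varepsilon\le 1/n$, and at that point $$|H\nabla\alpha-\alpha\nabla H|^2\ \ge\ \frac{n-1}{2}\,\varepsilon^2H^2|\nabla A|^2 .$$
   Context: $g$ is the induced metric, $\alpha$ the second fundamental form, $A$ the Weingarten map ($\alpha=g(A\cdot,\cdot)$), $k_1\le\dots\le k_n$ the principal curvatures, $H=\sum k_i$, $\nabla$ the Levi-Civita connection of $g$; norms are taken with respect to $g$, and $H\nabla\alpha-\alpha\nabla H$ denotes the 3-tensor $H\nabla_i\alpha_{jl}-\alpha_{jl}\nabla_iH$. *)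

theory Defs
  imports "HOL-Analysis.Analysis"
begin

text \<open>Pointwise data of a hypersurface M^n in R^(n+1) at a point p, written in an
 orthonormal frame e_1..e_n of T_pM (index type 'n, n = CARD('n)):
 sff i j = alpha(e_i,e_j) (= g(A e_i, e_j)), the second fundamental form;
 nsff i j l = (nabla_{e_i} alpha)(e_j,e_l), its covariant derivative.
 The metric is the identity in this frame, so norms are plain sums of squares.\<close>

definition mean_curv :: "real^'n^'n \<Rightarrow> real" where
  "mean_curv sff = (\<Sum>i\<in>UNIV. sff $ i $ i)"

definition grad_mean_curv :: "('n \<Rightarrow> 'n \<Rightarrow> 'n \<Rightarrow> real) \<Rightarrow> 'n \<Rightarrow> real" where
  "grad_mean_curv nsff i = (\<Sum>k\<in>UNIV. nsff i k k)"

definition form_ge :: "real^'n^'n \<Rightarrow> real \<Rightarrow> bool" where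
  "form_ge sff c \<longleftrightarrow> (\<forall>v::real^'n. v \<bullet> (sff *v v) \<ge> c * (v \<bullet> v))"

text \<open>|nabla A|^2 = |nabla alpha|^2.\<close>
definition norm2_3tensor :: "('n \<Rightarrow> 'n \<Rightarrow> 'n \<Rightarrow> real) \<Rightarrow> real" where
  "norm2_3tensor T = (\<Sum>i\<in>UNIV. \<Sum>j\<in>UNIV. \<Sum>l\<in>UNIV. (T i j l)\<^sup>2)"

end

theory Submission
  imports Defs
begin

(* Write a = alpha, b = nabla alpha (totally symmetric by the Codazzi
   equations), G = nabla H, and S_ijl = (G_j a_il + G_l a_ij)/2, the symmetrisation of
   a (x) G.  Expanding |H b - a (x) G|^2 and pairing b with S (which is allowed because b
   is symmetric) gives, for every c < 1, by Young's inequality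
     (1-c) |H b - a (x) G|^2 >= c(1-c) H^2 |b|^2 + (|G|^2|a|^2 - |a(G)|^2)/2 - c|G|^2|a|^2.
   This purely algebraic estimate is proved first (for arbitrary tensors).
   Next, for a symmetric form with alpha >= m g, m > 0, we show: m n <= H (hence eps <= 1/n),
   |a|^2 <= H^2 (from the 2x2 minors), and the Lagrange-type gap
     |G|^2 |a|^2 - |a(G)|^2 >= (n-1) m^2 |G|^2,
   obtained by summing |A v|^2 >= m^2 |v|^2 over the vectors v = G_i e_j - G_j e_i.
   With m = eps H and c = (n-1) eps^2 / 2 <= 1/4 the last two facts make the remainder of
   the algebraic estimate nonnegative, which yields the theorem. *)

definition norm2_vec :: "('n \<Rightarrow> real) \<Rightarrow> real" where
  "norm2_vec G = (\<Sum>i\<in>UNIV. (G i)\<^sup>2)"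

definition norm2_2tensor :: "('n \<Rightarrow> 'n \<Rightarrow> real) \<Rightarrow> real" where
  "norm2_2tensor a = (\<Sum>i\<in>UNIV. \<Sum>j\<in>UNIV. (a i j)\<^sup>2)"

definition contract :: "('n \<Rightarrow> 'n \<Rightarrow> real) \<Rightarrow> ('n \<Rightarrow> real) \<Rightarrow> 'n \<Rightarrow> real" where
  "contract a G i = (\<Sum>j\<in>UNIV. a i j * G j)"

section \<open>An algebraic estimate for |H b - a (x) G|^2\<close>

lemma norm2_shifted_tensor_expand:
  fixes b :: "'n \<Rightarrow> 'n \<Rightarrow> 'n \<Rightarrow> real" and a :: "'n \<Rightarrow> 'n \<Rightarrow> real" and G :: "'n \<Rightarrow> real"
  shows "norm2_3tensor (\<lambda>i j l. H * b i j l - a j l * G i)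
    = H\<^sup>2 * norm2_3tensor b - 2 * H * (\<Sum>i\<in>UNIV. \<Sum>j\<in>UNIV. \<Sum>l\<in>UNIV. b i j l * (a j l * G i))
      + norm2_vec G * norm2_2tensor a"
proof -
  have pointwise: "(H * b i j l - a j l * G i)\<^sup>2
      = H\<^sup>2 * (b i j l)\<^sup>2 - 2 * H * (b i j l * (a j l * G i)) + (G i)\<^sup>2 * (a j l)\<^sup>2" for i j l
    by (simp add: power2_eq_square algebra_simps)
  have "norm2_vec G * norm2_2tensor a = (\<Sum>i\<in>UNIV. (G i)\<^sup>2 * norm2_2tensor a)"
    by (simp add: norm2_vec_def sum_distrib_right)
  also have "\<dots> = (\<Sum>i\<in>UNIV. \<Sum>j\<in>UNIV. \<Sum>l\<in>UNIV. (G i)\<^sup>2 * (a j l)\<^sup>2)"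
    by (simp only: norm2_2tensor_def sum_distrib_left)
  finally have "norm2_vec G * norm2_2tensor a = (\<Sum>i\<in>UNIV. \<Sum>j\<in>UNIV. \<Sum>l\<in>UNIV. (G i)\<^sup>2 * (a j l)\<^sup>2)" .
  then show ?thesis
    unfolding norm2_3tensor_def pointwise sum.distrib sum_subtractf sum_distrib_left[symmetric]
    by simp
qed

lemma symmetric_pairing:
  fixes b :: "'n \<Rightarrow> 'n \<Rightarrow> 'n \<Rightarrow> real" and a :: "'n \<Rightarrow> 'n \<Rightarrow> real" and G :: "'n \<Rightarrow> real"
  assumes sym23: "\<And>i j l. b i j l = b i l j" and sym12: "\<And>i j l. b i j l = b j i l"
  shows "(\<Sum>i\<in>UNIV. \<Sum>j\<in>UNIV. \<Sum>l\<in>UNIV. b i j l * ((G j * a i l + G l * a i j) / 2))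
       = (\<Sum>i\<in>UNIV. \<Sum>j\<in>UNIV. \<Sum>l\<in>UNIV. b i j l * (a j l * G i))"
    (is "_ = ?p")
proof -
  have swap12: "(\<Sum>i\<in>UNIV. \<Sum>j\<in>UNIV. \<Sum>l\<in>UNIV. b i j l * (G j * a i l)) = ?p"
  proof -
    have "(\<Sum>i\<in>UNIV. \<Sum>j\<in>UNIV. \<Sum>l\<in>UNIV. b i j l * (G j * a i l))
       = (\<Sum>j\<in>UNIV. \<Sum>i\<in>UNIV. \<Sum>l\<in>UNIV. b i j l * (G j * a i l))" by (rule sum.swap)
    also have "\<dots> = ?p" by (intro sum.cong refl) (simp add: sym12 mult.commute)
    finally show ?thesis .
  qed
  have swap13: "(\<Sum>i\<in>UNIV. \<Sum>j\<in>UNIV. \<Sum>l\<in>UNIV. b i j l * (G l * a i j)) = ?p"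
  proof -
    have "(\<Sum>i\<in>UNIV. \<Sum>j\<in>UNIV. \<Sum>l\<in>UNIV. b i j l * (G l * a i j))
       = (\<Sum>i\<in>UNIV. \<Sum>l\<in>UNIV. \<Sum>j\<in>UNIV. b i j l * (G l * a i j))"
      by (intro sum.cong refl sum.swap)
    also have "\<dots> = (\<Sum>i\<in>UNIV. \<Sum>j\<in>UNIV. \<Sum>l\<in>UNIV. b i j l * (G j * a i l))"
      by (intro sum.cong refl) (simp add: sym23[of i j l for i j l])
    finally show ?thesis using swap12 by simp
  qed
  have "b i j l * ((G j * a i l + G l * a i j) / 2)
      = (b i j l * (G j * a i l)) / 2 + (b i j l * (G l * a i j)) / 2" for i j l
    by (simp add: algebra_simps add_divide_distrib)
  then show ?thesis
    by (simp add: sum.distrib sum_divide_distrib[symmetric] swap12 swap13)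
qed

lemma norm2_symmetrisation:
  fixes a :: "'n \<Rightarrow> 'n \<Rightarrow> real" and G :: "'n \<Rightarrow> real"
  shows "norm2_3tensor (\<lambda>i j l. (G j * a i l + G l * a i j) / 2)
      = (norm2_vec G * norm2_2tensor a + norm2_vec (contract a G)) / 2"
proof -
  have pointwise: "((G j * a i l + G l * a i j) / 2)\<^sup>2
      = ((G j)\<^sup>2 * (a i l)\<^sup>2) / 4 + ((G l)\<^sup>2 * (a i j)\<^sup>2) / 4 + ((G j * a i l) * (G l * a i j)) / 2"
    for i j l by (simp add: power2_eq_square field_simps)
  have square_j: "(\<Sum>i\<in>UNIV. \<Sum>j\<in>UNIV. \<Sum>l\<in>UNIV. (G j)\<^sup>2 * (a i l)\<^sup>2)
      = norm2_vec G * norm2_2tensor a"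
  proof -
    have "(\<Sum>i\<in>UNIV. \<Sum>j\<in>UNIV. \<Sum>l\<in>UNIV. (G j)\<^sup>2 * (a i l)\<^sup>2)
        = (\<Sum>j\<in>UNIV. \<Sum>i\<in>UNIV. \<Sum>l\<in>UNIV. (G j)\<^sup>2 * (a i l)\<^sup>2)" by (rule sum.swap)
    also have "\<dots> = (\<Sum>j\<in>UNIV. (G j)\<^sup>2 * norm2_2tensor a)"
      by (simp only: norm2_2tensor_def sum_distrib_left)
    finally show ?thesis by (simp add: norm2_vec_def sum_distrib_right)
  qed
  have square_l: "(\<Sum>i\<in>UNIV. \<Sum>j\<in>UNIV. \<Sum>l\<in>UNIV. (G l)\<^sup>2 * (a i j)\<^sup>2)
      = norm2_vec G * norm2_2tensor a"
  proof -
    have "(\<Sum>i\<in>UNIV. \<Sum>j\<in>UNIV. \<Sum>l\<in>UNIV. (G l)\<^sup>2 * (a i j)\<^sup>2)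
        = (\<Sum>i\<in>UNIV. \<Sum>l\<in>UNIV. \<Sum>j\<in>UNIV. (G l)\<^sup>2 * (a i j)\<^sup>2)"
      by (intro sum.cong refl sum.swap)
    then show ?thesis using square_j by simp
  qed
  have cross: "(\<Sum>i\<in>UNIV. \<Sum>j\<in>UNIV. \<Sum>l\<in>UNIV. (G j * a i l) * (G l * a i j))
      = norm2_vec (contract a G)"
    by (simp add: norm2_vec_def contract_def power2_eq_square sum_product algebra_simps)
  show ?thesis
    unfolding norm2_3tensor_def pointwise sum.distrib sum_divide_distrib[symmetric]
      square_j square_l cross
    by simp
qed

text \<open>The algebraic core: for totally symmetric b and c < 1, |H b - a (x) G|^2 >= c H^2 |b|^2
  as soon as the Lagrange-type gap |G|^2|a|^2 - |a(G)|^2 dominates 2c |G|^2|a|^2.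
  No relation between G and b (such as G = trace of b) is needed.\<close>
lemma kato_type_bound:
  fixes b :: "'n \<Rightarrow> 'n \<Rightarrow> 'n \<Rightarrow> real" and a :: "'n \<Rightarrow> 'n \<Rightarrow> real" and G :: "'n \<Rightarrow> real"
  assumes sym23: "\<And>i j l. b i j l = b i l j" and sym12: "\<And>i j l. b i j l = b j i l"
    and c_lt: "c < 1"
    and gap: "2 * c * (norm2_vec G * norm2_2tensor a)
              \<le> norm2_vec G * norm2_2tensor a - norm2_vec (contract a G)"
  shows "c * H\<^sup>2 * norm2_3tensor b \<le> norm2_3tensor (\<lambda>i j l. H * b i j l - a j l * G i)"
proof -
  define S where "S = (\<lambda>i j l. (G j * a i l + G l * a i j) / 2)"
  define p where "p = (\<Sum>i\<in>UNIV. \<Sum>j\<in>UNIV. \<Sum>l\<in>UNIV. b i j l * (a j l * G i))"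
  define ga q where "ga = norm2_vec G * norm2_2tensor a" and "q = norm2_vec (contract a G)"
  have young: "2 * (1 - c) * H * (b i j l * S i j l) \<le> (1 - c)\<^sup>2 * H\<^sup>2 * (b i j l)\<^sup>2 + (S i j l)\<^sup>2"
    for i j l
    using zero_le_power2[of "(1 - c) * H * b i j l - S i j l"]
    by (simp add: power2_eq_square algebra_simps)
  have "(\<Sum>i\<in>UNIV. \<Sum>j\<in>UNIV. \<Sum>l\<in>UNIV. 2 * (1 - c) * H * (b i j l * S i j l))
     \<le> (\<Sum>i\<in>UNIV. \<Sum>j\<in>UNIV. \<Sum>l\<in>UNIV. (1 - c)\<^sup>2 * H\<^sup>2 * (b i j l)\<^sup>2 + (S i j l)\<^sup>2)"
    by (intro sum_mono young)
  moreover have "(\<Sum>i\<in>UNIV. \<Sum>j\<in>UNIV. \<Sum>l\<in>UNIV. b i j l * S i j l) = p"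
    unfolding S_def p_def by (rule symmetric_pairing[OF sym23 sym12])
  moreover have "(\<Sum>i\<in>UNIV. \<Sum>j\<in>UNIV. \<Sum>l\<in>UNIV. (S i j l)\<^sup>2) = (ga + q) / 2"
    unfolding S_def ga_def q_def by (rule norm2_symmetrisation[unfolded norm2_3tensor_def])
  ultimately have pairing_bound:
    "2 * (1 - c) * H * p \<le> (1 - c)\<^sup>2 * H\<^sup>2 * norm2_3tensor b + (ga + q) / 2"
    unfolding sum.distrib sum_distrib_left[symmetric] norm2_3tensor_def by simp
  let ?X = "H\<^sup>2 * norm2_3tensor b - 2 * H * p + ga"
  have "(1 - c) * (c * H\<^sup>2 * norm2_3tensor b)
      = (1 - c) * ?X - ((1 - c)\<^sup>2 * H\<^sup>2 * norm2_3tensor b + (ga + q) / 2 - 2 * (1 - c) * H * p)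
        - ((ga - q) / 2 - c * ga)"
    by (simp add: algebra_simps power2_eq_square add_divide_distrib[symmetric])
  also have "\<dots> \<le> (1 - c) * ?X"
  proof -
    have "0 \<le> (1 - c)\<^sup>2 * H\<^sup>2 * norm2_3tensor b + (ga + q) / 2 - 2 * (1 - c) * H * p"
      using pairing_bound by linarith
    moreover have "0 \<le> (ga - q) / 2 - c * ga"
      using gap unfolding ga_def[symmetric] q_def[symmetric] by (simp add: field_simps)
    ultimately show ?thesis by linarith
  qed
  finally have "(1 - c) * (c * H\<^sup>2 * norm2_3tensor b) \<le> (1 - c) * ?X" .
  then have "c * H\<^sup>2 * norm2_3tensor b \<le> H\<^sup>2 * norm2_3tensor b - 2 * H * p + ga"
    using c_lt by simp
  then show ?thesis
    by (simp add: norm2_shifted_tensor_expand p_def ga_def)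
qed

section \<open>Quadratic forms bounded below\<close>

text \<open>The vector x e_i + y e_j, used to test the form on coordinate 2-planes.\<close>
definition pair_vec :: "'n \<Rightarrow> real \<Rightarrow> 'n \<Rightarrow> real \<Rightarrow> real^'n" where
  "pair_vec i x j y = (\<chi> k. (if k = i then x else 0) + (if k = j then y else 0))"

lemma mult_if_zero: "(c::real) * (if P then x else 0) = (if P then c * x else 0)"
  by simp

lemma matrix_pair_vec: "((A::real^'n^'n) *v pair_vec i x j y) $ l = A$l$i * x + A$l$j * y"
  unfolding pair_vec_def matrix_vector_mult_def
  by (simp add: distrib_left mult_if_zero sum.distrib)

lemma quadratic_pair_vec: "pair_vec i x j y \<bullet> ((A::real^'n^'n) *v pair_vec i x j y)
   = x*x*A$i$i + x*y*A$i$j + y*x*A$j$i + y*y*A$j$j"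
  unfolding inner_vec_def matrix_pair_vec
  by (simp add: pair_vec_def distrib_right mult_if_zero sum.distrib algebra_simps)

lemma inner_pair_vec: "pair_vec i x j y \<bullet> pair_vec i x j y = x*x + 2*x*y*(if i = j then 1 else 0) + y*y"
  unfolding inner_vec_def
  by (simp add: pair_vec_def distrib_right distrib_left mult_if_zero sum.distrib algebra_simps)

lemma form_ge_diag:
  assumes "form_ge A m"
  shows "m \<le> A $ i $ i"
  using assms[unfolded form_ge_def, rule_format, of "pair_vec i 1 i 0"]
  by (simp add: quadratic_pair_vec inner_pair_vec)

lemma form_ge_trace:
  assumes "form_ge A m"
  shows "real CARD('n) * m \<le> mean_curv (A::real^'n^'n)"
  unfolding mean_curv_def using sum_mono[of UNIV "\<lambda>i. m" "\<lambda>i. A $ i $ i"] form_ge_diag[OF assms]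
  by simp

lemma form_ge_minor:
  fixes A :: "real^'n^'n"
  assumes sym: "\<And>i j. A $ i $ j = A $ j $ i" and ge: "form_ge A m" and m_pos: "m > 0"
  shows "(A $ i $ j)\<^sup>2 \<le> A $ i $ i * A $ j $ j"
proof -
  let ?v = "pair_vec i (A $ j $ j) j (- A $ i $ j)"
  have "0 \<le> m * (?v \<bullet> ?v)" using m_pos by simp
  also have "\<dots> \<le> ?v \<bullet> (A *v ?v)" using ge by (simp add: form_ge_def)
  also have "\<dots> = A $ j $ j * (A $ i $ i * A $ j $ j - (A $ i $ j)\<^sup>2)"
    unfolding quadratic_pair_vec using sym[of j i] by (simp add: power2_eq_square algebra_simps)
  finally have "0 \<le> A $ j $ j * (A $ i $ i * A $ j $ j - (A $ i $ j)\<^sup>2)" .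
  moreover have "A $ j $ j > 0" using form_ge_diag[OF ge, of j] m_pos by simp
  ultimately show ?thesis by (simp add: zero_le_mult_iff)
qed

lemma norm2_le_mean_curv_sq:
  fixes A :: "real^'n^'n"
  assumes "\<And>i j. A $ i $ j = A $ j $ i" and "form_ge A m" and "m > 0"
  shows "norm2_2tensor (\<lambda>i j. A $ i $ j) \<le> (mean_curv A)\<^sup>2"
proof -
  have "norm2_2tensor (\<lambda>i j. A $ i $ j) \<le> (\<Sum>i\<in>UNIV. \<Sum>j\<in>UNIV. A $ i $ i * A $ j $ j)"
    unfolding norm2_2tensor_def by (intro sum_mono form_ge_minor[OF assms])
  also have "\<dots> = (mean_curv A)\<^sup>2" by (simp add: mean_curv_def power2_eq_square sum_product)
  finally show ?thesis .
qed

lemma form_ge_image_norm: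
  fixes A :: "real^'n^'n"
  assumes ge: "form_ge A m" and m_pos: "m > 0"
  shows "m\<^sup>2 * (v \<bullet> v) \<le> (A *v v) \<bullet> (A *v v)"
proof -
  have "m * (norm v)\<^sup>2 \<le> v \<bullet> (A *v v)"
    using ge by (simp add: form_ge_def power2_norm_eq_inner)
  also have "\<dots> \<le> norm v * norm (A *v v)" using norm_cauchy_schwarz by blast
  finally have "m * norm v \<le> norm (A *v v)"
    by (cases "norm v = 0") (simp_all add: power2_eq_square)
  then have "(m * norm v)\<^sup>2 \<le> (norm (A *v v))\<^sup>2"
    using m_pos by (intro power_mono) auto
  then show ?thesis by (simp add: power2_norm_eq_inner power_mult_distrib)
qed

lemma sum_norm2_wedge_vectors:
  fixes G :: "'n::finite \<Rightarrow> real"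
  shows "(\<Sum>i\<in>UNIV. \<Sum>j\<in>UNIV. pair_vec i (- G j) j (G i) \<bullet> pair_vec i (- G j) j (G i))
       = 2 * real CARD('n) * norm2_vec G - 2 * norm2_vec G"
proof -
  have pointwise: "pair_vec i (- G j) j (G i) \<bullet> pair_vec i (- G j) j (G i)
      = (G j)\<^sup>2 + (G i)\<^sup>2 - 2 * (if i = j then (G i)\<^sup>2 else 0)" for i j
    unfolding inner_pair_vec by (simp add: power2_eq_square)
  show ?thesis
    unfolding pointwise sum_subtractf sum.distrib by (simp add: norm2_vec_def sum_distrib_left[symmetric]
        if_distrib sum.delta cong: if_cong)
qed

lemma sum_norm2_image_wedge_vectors:
  fixes A :: "real^'n^'n" and G :: "'n \<Rightarrow> real"
  defines "a \<equiv> \<lambda>i j. A $ i $ j"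
  shows "(\<Sum>i\<in>UNIV. \<Sum>j\<in>UNIV. (A *v pair_vec i (- G j) j (G i)) \<bullet> (A *v pair_vec i (- G j) j (G i)))
       = 2 * (norm2_vec G * norm2_2tensor a) - 2 * norm2_vec (contract a G)"
proof -
  have image: "(A *v pair_vec i (- G j) j (G i)) \<bullet> (A *v pair_vec i (- G j) j (G i))
     = (\<Sum>l\<in>UNIV. (a l i)\<^sup>2 * (G j)\<^sup>2 + (a l j)\<^sup>2 * (G i)\<^sup>2 - 2 * ((a l i * G i) * (a l j * G j)))"
    for i j
    unfolding inner_vec_def matrix_pair_vec a_def
    by (intro sum.cong refl) (simp add: power2_eq_square algebra_simps)
  have first: "(\<Sum>i\<in>UNIV. \<Sum>j\<in>UNIV. \<Sum>l\<in>UNIV. (a l i)\<^sup>2 * (G j)\<^sup>2) = norm2_vec G * norm2_2tensor a"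
  proof -
    have "(\<Sum>i\<in>UNIV. \<Sum>j\<in>UNIV. \<Sum>l\<in>UNIV. (a l i)\<^sup>2 * (G j)\<^sup>2)
        = (\<Sum>i\<in>UNIV. \<Sum>l\<in>UNIV. \<Sum>j\<in>UNIV. (G j)\<^sup>2 * (a l i)\<^sup>2)"
      by (intro sum.cong refl sum.swap[THEN trans]) (simp add: mult.commute)
    also have "\<dots> = (\<Sum>l\<in>UNIV. \<Sum>i\<in>UNIV. \<Sum>j\<in>UNIV. (G j)\<^sup>2 * (a l i)\<^sup>2)"
      by (rule sum.swap)
    also have "\<dots> = norm2_vec G * norm2_2tensor a"
      by (simp only: norm2_vec_def norm2_2tensor_def sum_distrib_left sum_distrib_right mult.commute)
    finally show ?thesis .
  qed
  have second: "(\<Sum>i\<in>UNIV. \<Sum>j\<in>UNIV. \<Sum>l\<in>UNIV. (a l j)\<^sup>2 * (G i)\<^sup>2) = norm2_vec G * norm2_2tensor a"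
  proof -
    have "(\<Sum>i\<in>UNIV. \<Sum>j\<in>UNIV. \<Sum>l\<in>UNIV. (a l j)\<^sup>2 * (G i)\<^sup>2)
        = (\<Sum>j\<in>UNIV. \<Sum>i\<in>UNIV. \<Sum>l\<in>UNIV. (a l j)\<^sup>2 * (G i)\<^sup>2)" by (rule sum.swap)
    then show ?thesis using first by simp
  qed
  have cross: "(\<Sum>i\<in>UNIV. \<Sum>j\<in>UNIV. \<Sum>l\<in>UNIV. (a l i * G i) * (a l j * G j))
      = norm2_vec (contract a G)"
  proof -
    have "(\<Sum>i\<in>UNIV. \<Sum>j\<in>UNIV. \<Sum>l\<in>UNIV. (a l i * G i) * (a l j * G j))
        = (\<Sum>i\<in>UNIV. \<Sum>l\<in>UNIV. \<Sum>j\<in>UNIV. (a l i * G i) * (a l j * G j))"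
      by (intro sum.cong refl sum.swap)
    also have "\<dots> = (\<Sum>l\<in>UNIV. \<Sum>i\<in>UNIV. \<Sum>j\<in>UNIV. (a l i * G i) * (a l j * G j))"
      by (rule sum.swap)
    finally show ?thesis
      by (simp add: norm2_vec_def contract_def power2_eq_square sum_product)
  qed
  show ?thesis
    unfolding image sum_subtractf sum.distrib sum_distrib_left[symmetric] first second cross
    by simp
qed

lemma lagrange_gap:
  fixes A :: "real^'n^'n" and G :: "'n \<Rightarrow> real"
  assumes "form_ge A m" and "m > 0"
  shows "(real CARD('n) - 1) * m\<^sup>2 * norm2_vec G
      \<le> norm2_vec G * norm2_2tensor (\<lambda>i j. A $ i $ j) - norm2_vec (contract (\<lambda>i j. A $ i $ j) G)"
proof -
  have "(\<Sum>i\<in>UNIV. \<Sum>j\<in>UNIV. m\<^sup>2 * (pair_vec i (- G j) j (G i) \<bullet> pair_vec i (- G j) j (G i)))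
     \<le> (\<Sum>i\<in>UNIV. \<Sum>j\<in>UNIV. (A *v pair_vec i (- G j) j (G i)) \<bullet> (A *v pair_vec i (- G j) j (G i)))"
    by (intro sum_mono form_ge_image_norm[OF assms])
  then show ?thesis
    unfolding sum_distrib_left[symmetric] sum_norm2_wedge_vectors sum_norm2_image_wedge_vectors
    by (simp add: algebra_simps)
qed

section \<open>The pinching estimate\<close>

lemma pinching_constant_le:
  fixes n \<epsilon> :: real
  assumes n: "n \<ge> 1" and eps: "0 < \<epsilon>" "\<epsilon> \<le> 1 / n"
  shows "(n - 1) / 2 * \<epsilon>\<^sup>2 \<le> 1 / 4"
proof -
  have "\<epsilon>\<^sup>2 \<le> (1 / n)\<^sup>2" using eps by (intro power_mono) auto
  then have "(n - 1) / 2 * \<epsilon>\<^sup>2 \<le> (n - 1) / 2 * (1 / n)\<^sup>2"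
    using n by (intro mult_left_mono) auto
  also have "\<dots> = (n - 1) / (2 * n\<^sup>2)" by (simp add: power2_eq_square)
  also have "\<dots> \<le> 1 / 4"
    using n zero_le_power2[of "n - 2"] by (simp add: divide_le_eq power2_eq_square algebra_simps)
  finally show ?thesis .
qed

theorem mainTheorem3:
  fixes sff :: "real^'n^'n" and nsff :: "'n \<Rightarrow> 'n \<Rightarrow> 'n \<Rightarrow> real" and \<epsilon> :: real
  assumes sym: "\<And>i j. sff $ i $ j = sff $ j $ i"
    and nsym: "\<And>i j l. nsff i j l = nsff i l j"
    and codazzi: "\<And>i j l. nsff i j l = nsff j i l"
    and eps_pos: "\<epsilon> > 0"
    and pinch: "form_ge sff (\<epsilon> * mean_curv sff)"
    and H_pos: "\<epsilon> * mean_curv sff > 0"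
  shows "\<epsilon> \<le> 1 / real CARD('n)
    \<and> norm2_3tensor (\<lambda>i j l. mean_curv sff * nsff i j l - sff $ j $ l * grad_mean_curv nsff i)
        \<ge> (real CARD('n) - 1) / 2 * \<epsilon>\<^sup>2 * (mean_curv sff)\<^sup>2 * norm2_3tensor nsff"
proof -
  define H n a G where "H = mean_curv sff" and "n = real CARD('n)"
    and "a = (\<lambda>i j. sff $ i $ j)" and "G = grad_mean_curv nsff"
  define c where "c = (n - 1) / 2 * \<epsilon>\<^sup>2"
  have n_ge: "n \<ge> 1" by (simp add: n_def)
  have H_gt: "H > 0" using H_pos eps_pos by (simp add: H_def zero_less_mult_iff)
  have "n * (\<epsilon> * H) \<le> H" using form_ge_trace[OF pinch] by (simp add: n_def H_def)
  then have eps_le: "\<epsilon> \<le> 1 / n" using H_gt n_ge by (simp add: field_simps)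
  have c_bounds: "0 \<le> c" "c < 1"
    using n_ge pinching_constant_le[OF n_ge eps_pos eps_le] by (simp_all add: c_def)
  have "2 * c * (norm2_vec G * norm2_2tensor a) \<le> 2 * c * (norm2_vec G * H\<^sup>2)"
    using norm2_le_mean_curv_sq[OF sym pinch H_pos] c_bounds
    by (intro mult_left_mono) (simp_all add: a_def H_def norm2_vec_def sum_nonneg)
  also have "\<dots> = (n - 1) * (\<epsilon> * H)\<^sup>2 * norm2_vec G" by (simp add: c_def power_mult_distrib)
  also have "\<dots> \<le> norm2_vec G * norm2_2tensor a - norm2_vec (contract a G)"
    using lagrange_gap[OF pinch H_pos] by (simp add: n_def H_def a_def)
  finally have "c * H\<^sup>2 * norm2_3tensor nsff \<le> norm2_3tensor (\<lambda>i j l. H * nsff i j l - a j l * G i)"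
    by (rule kato_type_bound[OF nsym codazzi c_bounds(2)])
  then show ?thesis using eps_le by (simp add: c_def H_def n_def a_def G_def)
qed

end
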